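(* Let $A,B$ be $C^*$-algebras, $\phi:A\to\mathbf B(\mathcal H)$ and $\psi:B\to\mathbf B(\mathcal K)$ completely positive linear maps with minimal Stinespring representations $(\pi_\phi,V_\phi,\mathcal H_\phi)$ and $(\pi_\psi,V_\psi,\mathcal H_\psi)$. Suppose $X$ is an $A$–$B$-equivalence bimodule and $\pi_X:X\to\mathbf B(\mathcal H_\psi,\mathcal H_\phi)$ is a linear map such that $(\pi_\phi,\pi_X,\pi_\psi)$ is a representation of $X$ on $(\mathcal H_\phi,\mathcal H_\psi)$. Let $L_X=\left\{\begin{bmatrix} a & x\\ \widetilde y & b\end{bmatrix}: a\in A,b\in B,x,y\in X\right\}$ be the linking $C^*$-algebra of $X$, let $\rho$ be the representation of $L_X$ on $\mathcal H_\phi\oplus\mathcal H_\psi$ given by $\rho\left(\begin{bmatrix} a & x\\ \widetilde y & b\end{bmatrix}\right)=\begin{bmatrix}\pi_\phi(a) & \pi_X(x)\\ \pi_X(y)^* & \pi_\psi(b)\end{bmatrix}$, and let $\tau:L_X\to\mathbf B(\mathcal H\oplus\mathcal K)$ be $\tau(l)=(V_\phi\oplus V_\psi)^*\rho(l)(V_\phi\oplus V_\psi)$. Then $(\rho, V_\phi\oplus V_\psi,\mathcal H_\phi\oplus\mathcal H_\psi)$ is a minimal Stinespring representation for $\tau$.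
   Context: For an $A$–$B$-equivalence bimodule $X$, $\widetilde X$ denotes the dual $B$–$A$-bimodule with $\widetilde y$ the element corresponding to $y\in X$. A representation of $X$ on $(\mathcal H,\mathcal K)$ is a triple $(\pi_A,\pi_X,\pi_B)$ with $\pi_A,\pi_B$ non-degenerate representations of $A$ on $\mathcal H$, $B$ on $\mathcal K$, and $\pi_X:X\to\mathbf B(\mathcal K,\mathcal H)$ linear with $\pi_X(x)\pi_X(y)^*=\pi_A({}_A\langle x,y\rangle)$, $\pi_X(x)^*\pi_X(y)=\pi_B(\langle x,y\rangle_B)$, $\pi_X(a\cdot x\cdot b)=\pi_A(a)\pi_X(x)\pi_B(b)$. A minimal Stinespring representation of a completely positive $\phi:A\to\mathbf B(\mathcal H)$ is $(\pi_\phi,V_\phi,\mathcal H_\phi)$ with $\pi_\phi$ a representation of $A$ on $\mathcal H_\phi$, $V_\phi\in\mathbf B(\mathcal H,\mathcal H_\phi)$, $\phi(a)=V_\phi^*\pi_\phi(a)V_\phi$ for all $a$, and $\overline{\pi_\phi(A)V_\phi\mathcal H}=\mathcal H_\phi$. *)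

theory Defs
  imports "HOL-Analysis.Analysis"
begin

class complex_vector = real_vector +
  fixes scaleC :: "complex \<Rightarrow> 'a \<Rightarrow> 'a"
  assumes scaleC_add_right: "scaleC c (x + y) = scaleC c x + scaleC c y"
    and scaleC_add_left: "scaleC (c + d) x = scaleC c x + scaleC d x"
    and scaleC_scaleC: "scaleC c (scaleC d x) = scaleC (c * d) x"
    and scaleC_of_real: "scaleC (complex_of_real r) x = scaleR r x"

text \<open>A complex Hilbert space: a complete real inner product space carrying a complex
  structure for which multiplication by i is isometric; the complex inner product is
  recovered as cinner below (linear in the first, conjugate linear in the second argument),
  and its real part is the real inner product, so norm and topology are the library ones.\<close>
class complex_hilbert = complex_vector + real_inner + complete_space +
  assumes inner_scaleC_i: "inner (scaleC \<i> x) (scaleC \<i> y) = inner x y"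

definition cinner :: "'h::complex_hilbert \<Rightarrow> 'h \<Rightarrow> complex" where
  "cinner x y = Complex (inner x y) (- inner (scaleC \<i> x) y)"

instantiation prod :: (complex_vector, complex_vector) complex_vector
begin
definition scaleC_prod_def: "scaleC c x = (scaleC c (fst x), scaleC c (snd x))"
instance
  by standard (auto simp: scaleC_prod_def scaleC_add_right scaleC_add_left
      scaleC_scaleC scaleC_of_real scaleR_prod_def)
end

instance prod :: (complex_hilbert, complex_hilbert) complex_hilbert
  by standard (simp add: inner_prod_def scaleC_prod_def inner_scaleC_i)

definition cspan :: "'a::complex_vector set \<Rightarrow> 'a set" where
  "cspan S = span {scaleC c v | c v. v \<in> S}"

definition cblin :: "('h::complex_hilbert \<Rightarrow> 'k::complex_hilbert) \<Rightarrow> bool" where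
  "cblin T \<longleftrightarrow> bounded_linear T \<and> (\<forall>c x. T (scaleC c x) = scaleC c (T x))"

definition adj :: "('h::complex_hilbert \<Rightarrow> 'k::complex_hilbert) \<Rightarrow> ('k \<Rightarrow> 'h)" where
  "adj T = (SOME S. \<forall>x y. cinner (T x) y = cinner x (S y))"

class cstar = complex_vector + real_normed_algebra + complete_space +
  fixes sstar :: "'a \<Rightarrow> 'a"
  assumes sstar_sstar: "sstar (sstar x) = x"
    and sstar_add: "sstar (x + y) = sstar x + sstar y"
    and sstar_scaleC: "sstar (scaleC c x) = scaleC (cnj c) (sstar x)"
    and sstar_mult: "sstar (x * y) = sstar y * sstar x"
    and cstar_identity: "norm (sstar x * x) = norm x * norm x"
    and scaleC_mult_left: "scaleC c (x * y) = scaleC c x * y"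
    and scaleC_mult_right: "scaleC c (x * y) = x * scaleC c y"
    and norm_scaleC: "norm (scaleC c x) = cmod c * norm x"

definition cpositive :: "'a::cstar \<Rightarrow> bool" where
  "cpositive b \<longleftrightarrow> (\<exists>c. b = sstar c * c)"

definition srep ::
  "('l \<Rightarrow> 'l \<Rightarrow> 'l) \<Rightarrow> (complex \<Rightarrow> 'l \<Rightarrow> 'l) \<Rightarrow> ('l \<Rightarrow> 'l \<Rightarrow> 'l) \<Rightarrow> ('l \<Rightarrow> 'l)
    \<Rightarrow> ('l \<Rightarrow> 'h::complex_hilbert \<Rightarrow> 'h) \<Rightarrow> bool" where
  "srep add scal mul st \<pi> \<longleftrightarrow>
     (\<forall>l. cblin (\<pi> l)) \<and>
     (\<forall>l m. \<pi> (add l m) = (\<lambda>h. \<pi> l h + \<pi> m h)) \<and>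
     (\<forall>c l. \<pi> (scal c l) = (\<lambda>h. scaleC c (\<pi> l h))) \<and>
     (\<forall>l m. \<pi> (mul l m) = \<pi> l \<circ> \<pi> m) \<and>
     (\<forall>l. \<pi> (st l) = adj (\<pi> l))"

definition is_rep :: "('a::cstar \<Rightarrow> 'h::complex_hilbert \<Rightarrow> 'h) \<Rightarrow> bool" where
  "is_rep \<pi> \<longleftrightarrow> srep (+) scaleC (*) sstar \<pi>"

definition nondegenerate :: "('a::cstar \<Rightarrow> 'h::complex_hilbert \<Rightarrow> 'h) \<Rightarrow> bool" where
  "nondegenerate \<pi> \<longleftrightarrow> closure (cspan {\<pi> a h | a h. True}) = UNIV"

definition completely_positive :: "('a::cstar \<Rightarrow> 'h::complex_hilbert \<Rightarrow> 'h) \<Rightarrow> bool" where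
  "completely_positive \<phi> \<longleftrightarrow>
     (\<forall>a. cblin (\<phi> a)) \<and>
     (\<forall>a b. \<phi> (a + b) = (\<lambda>h. \<phi> a h + \<phi> b h)) \<and>
     (\<forall>c a. \<phi> (scaleC c a) = (\<lambda>h. scaleC c (\<phi> a h))) \<and>
     (\<forall>(n::nat) (c :: nat \<Rightarrow> nat \<Rightarrow> 'a) (h :: nat \<Rightarrow> 'h).
        let s = (\<Sum>i<n. \<Sum>j<n. cinner (\<phi> (\<Sum>k<n. sstar (c k i) * c k j) (h j)) (h i))
        in Im s = 0 \<and> Re s \<ge> 0)"

definition min_stinespring_ops ::
  "('l \<Rightarrow> 'l \<Rightarrow> 'l) \<Rightarrow> (complex \<Rightarrow> 'l \<Rightarrow> 'l) \<Rightarrow> ('l \<Rightarrow> 'l \<Rightarrow> 'l) \<Rightarrow> ('l \<Rightarrow> 'l)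
    \<Rightarrow> ('l \<Rightarrow> 'h::complex_hilbert \<Rightarrow> 'h) \<Rightarrow> ('l \<Rightarrow> 'p::complex_hilbert \<Rightarrow> 'p)
    \<Rightarrow> ('h \<Rightarrow> 'p) \<Rightarrow> bool" where
  "min_stinespring_ops add scal mul st \<phi> \<pi> V \<longleftrightarrow>
     srep add scal mul st \<pi> \<and> cblin V \<and>
     (\<forall>l. \<phi> l = adj V \<circ> \<pi> l \<circ> V) \<and>
     closure (cspan {\<pi> l (V h) | l h. True}) = UNIV"

definition min_stinespring ::
  "('a::cstar \<Rightarrow> 'h::complex_hilbert \<Rightarrow> 'h) \<Rightarrow> ('a \<Rightarrow> 'p::complex_hilbert \<Rightarrow> 'p)
    \<Rightarrow> ('h \<Rightarrow> 'p) \<Rightarrow> bool" where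
  "min_stinespring \<phi> \<pi> V \<longleftrightarrow> min_stinespring_ops (+) scaleC (*) sstar \<phi> \<pi> V"

definition complete_wrt :: "('x::real_vector \<Rightarrow> real) \<Rightarrow> bool" where
  "complete_wrt nm \<longleftrightarrow>
     (\<forall>s::nat \<Rightarrow> 'x. (\<forall>e>0. \<exists>N. \<forall>m\<ge>N. \<forall>n\<ge>N. nm (s m - s n) < e) \<longrightarrow>
        (\<exists>x. \<forall>e>0. \<exists>N. \<forall>n\<ge>N. nm (s n - x) < e))"

text \<open>X (the whole type 'x) with left A-action lact, right B-action ract, A-valued inner
  product lip (linear in the first variable) and B-valued inner product rip (linear in the
  second variable) is an A-B-equivalence bimodule (Raeburn-Williams, Def. 3.1): a full left
  Hilbert A-module, a full right Hilbert B-module, with the compatibility conditions.\<close>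
definition equivalence_bimodule ::
  "('a::cstar \<Rightarrow> 'x::complex_vector \<Rightarrow> 'x) \<Rightarrow> ('x \<Rightarrow> 'b::cstar \<Rightarrow> 'x)
    \<Rightarrow> ('x \<Rightarrow> 'x \<Rightarrow> 'a) \<Rightarrow> ('x \<Rightarrow> 'x \<Rightarrow> 'b) \<Rightarrow> bool" where
  "equivalence_bimodule lact ract lip rip \<longleftrightarrow>
     \<comment> \<open>right B-module\<close>
     (\<forall>x y b. ract (x + y) b = ract x b + ract y b) \<and>
     (\<forall>x b c. ract x (b + c) = ract x b + ract x c) \<and>
     (\<forall>x b c. ract x (b * c) = ract (ract x b) c) \<and>
     (\<forall>z x b. scaleC z (ract x b) = ract (scaleC z x) b) \<and>
     (\<forall>z x b. scaleC z (ract x b) = ract x (scaleC z b)) \<and>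
     \<comment> \<open>left A-module\<close>
     (\<forall>a x y. lact a (x + y) = lact a x + lact a y) \<and>
     (\<forall>a c x. lact (a + c) x = lact a x + lact c x) \<and>
     (\<forall>a c x. lact (a * c) x = lact a (lact c x)) \<and>
     (\<forall>z a x. scaleC z (lact a x) = lact a (scaleC z x)) \<and>
     (\<forall>z a x. scaleC z (lact a x) = lact (scaleC z a) x) \<and>
     \<comment> \<open>bimodule\<close>
     (\<forall>a x b. lact a (ract x b) = ract (lact a x) b) \<and>
     \<comment> \<open>right B-valued inner product\<close>
     (\<forall>x y z. rip x (y + z) = rip x y + rip x z) \<and>
     (\<forall>x y c. rip x (scaleC c y) = scaleC c (rip x y)) \<and>
     (\<forall>x y b. rip x (ract y b) = rip x y * b) \<and>
     (\<forall>x y. rip y x = sstar (rip x y)) \<and>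
     (\<forall>x. cpositive (rip x x)) \<and>
     (\<forall>x. rip x x = 0 \<longrightarrow> x = 0) \<and>
     complete_wrt (\<lambda>x. sqrt (norm (rip x x))) \<and>
     closure (cspan {rip x y | x y. True}) = UNIV \<and>
     \<comment> \<open>left A-valued inner product\<close>
     (\<forall>x y z. lip (x + y) z = lip x z + lip y z) \<and>
     (\<forall>x y c. lip (scaleC c x) y = scaleC c (lip x y)) \<and>
     (\<forall>a x y. lip (lact a x) y = a * lip x y) \<and>
     (\<forall>x y. lip y x = sstar (lip x y)) \<and>
     (\<forall>x. cpositive (lip x x)) \<and>
     (\<forall>x. lip x x = 0 \<longrightarrow> x = 0) \<and>
     complete_wrt (\<lambda>x. sqrt (norm (lip x x))) \<and>
     closure (cspan {lip x y | x y. True}) = UNIV \<and>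
     \<comment> \<open>compatibility\<close>
     (\<forall>x y z. lact (lip x y) z = ract x (rip y z)) \<and>
     (\<forall>a x y. rip (lact a x) y = rip x (lact (sstar a) y)) \<and>
     (\<forall>x b y. lip (ract x b) y = lip x (ract y (sstar b)))"

definition bimodule_rep ::
  "('a::cstar \<Rightarrow> 'x::complex_vector \<Rightarrow> 'x) \<Rightarrow> ('x \<Rightarrow> 'b::cstar \<Rightarrow> 'x)
    \<Rightarrow> ('x \<Rightarrow> 'x \<Rightarrow> 'a) \<Rightarrow> ('x \<Rightarrow> 'x \<Rightarrow> 'b)
    \<Rightarrow> ('a \<Rightarrow> 'h::complex_hilbert \<Rightarrow> 'h) \<Rightarrow> ('x \<Rightarrow> 'k::complex_hilbert \<Rightarrow> 'h)
    \<Rightarrow> ('b \<Rightarrow> 'k \<Rightarrow> 'k) \<Rightarrow> bool" where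
  "bimodule_rep lact ract lip rip piA piX piB \<longleftrightarrow>
     is_rep piA \<and> nondegenerate piA \<and> is_rep piB \<and> nondegenerate piB \<and>
     (\<forall>x. cblin (piX x)) \<and>
     (\<forall>x y. piX (x + y) = (\<lambda>k. piX x k + piX y k)) \<and>
     (\<forall>c x. piX (scaleC c x) = (\<lambda>k. scaleC c (piX x k))) \<and>
     (\<forall>x y. piX x \<circ> adj (piX y) = piA (lip x y)) \<and>
     (\<forall>x y. adj (piX x) \<circ> piX y = piB (rip x y)) \<and>
     (\<forall>a x b. piX (lact a (ract x b)) = piA a \<circ> piX x \<circ> piB b)"

text \<open>An element (a, x, y, b) represents the matrix [a, x; y~, b] of the linking algebra L_X,
  where y~ is the element of the dual module corresponding to y.  Note c . y~ = (cnj c . y)~,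
  y1~ . a = (a* . y1)~, b . y2~ = (y2 . b*)~, x1 . y2~ = lip x1 y2, y1~ . x2 = rip y1 x2,
  and [a, x; y~, b]* = [a*, y; x~, b*].\<close>
type_synonym ('a, 'x, 'b) linking = "'a \<times> 'x \<times> 'x \<times> 'b"

definition link_add :: "('a::cstar, 'x::complex_vector, 'b::cstar) linking \<Rightarrow> ('a, 'x, 'b) linking \<Rightarrow> ('a, 'x, 'b) linking" where
  "link_add l m = (case l of (a1, x1, y1, b1) \<Rightarrow> case m of (a2, x2, y2, b2) \<Rightarrow>
      (a1 + a2, x1 + x2, y1 + y2, b1 + b2))"

definition link_scal :: "complex \<Rightarrow> ('a::cstar, 'x::complex_vector, 'b::cstar) linking \<Rightarrow> ('a, 'x, 'b) linking" where
  "link_scal c l = (case l of (a, x, y, b) \<Rightarrow>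
      (scaleC c a, scaleC c x, scaleC (cnj c) y, scaleC c b))"

definition link_mult ::
  "('a::cstar \<Rightarrow> 'x::complex_vector \<Rightarrow> 'x) \<Rightarrow> ('x \<Rightarrow> 'b::cstar \<Rightarrow> 'x)
    \<Rightarrow> ('x \<Rightarrow> 'x \<Rightarrow> 'a) \<Rightarrow> ('x \<Rightarrow> 'x \<Rightarrow> 'b)
    \<Rightarrow> ('a, 'x, 'b) linking \<Rightarrow> ('a, 'x, 'b) linking \<Rightarrow> ('a, 'x, 'b) linking" where
  "link_mult lact ract lip rip l m = (case l of (a1, x1, y1, b1) \<Rightarrow> case m of (a2, x2, y2, b2) \<Rightarrow>
      (a1 * a2 + lip x1 y2,
       lact a1 x2 + ract x1 b2,
       lact (sstar a2) y1 + ract y2 (sstar b1),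
       rip y1 x2 + b1 * b2))"

definition link_star :: "('a::cstar, 'x::complex_vector, 'b::cstar) linking \<Rightarrow> ('a, 'x, 'b) linking" where
  "link_star l = (case l of (a, x, y, b) \<Rightarrow> (sstar a, y, x, sstar b))"

end

theory Submission
  imports Defs
begin

text \<open>The 2 x 2 operator matrix rho is a *-representation of the linking algebra because the
  relations of a bimodule representation are exactly the matrix identities needed for
  multiplicativity.  The only ones not given outright, pi_X(a x) = pi_phi(a) pi_X(x) and
  pi_X(x b) = pi_X(x) pi_psi(b), hold because the two sides S, T satisfy
  S S* = S T* = T S* = T T* (resp. the same with the adjoints on the left), so their difference D
  has D D* = 0 (resp. D* D = 0).  Minimality: the corners [a, 0; 0, 0] and [0, 0; 0, b] applied to
  the range of V_phi + V_psi already span dense subspaces of H_phi + 0 and 0 + H_psi.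
  Adjoints exist by the Riesz representation theorem, whose proof minimises the norm on a closed
  affine hyperplane.\<close>

section \<open>The Riesz representation theorem\<close>

lemma Cauchy_minimizing_sequence:
  fixes s :: "nat \<Rightarrow> 'a::real_inner"
  assumes "convex S" and sS: "\<And>n. s n \<in> S" and d_le: "\<And>y. y \<in> S \<Longrightarrow> d \<le> norm y"
    and d0: "0 \<le> d" and sn: "\<And>n. norm (s n)^2 < d^2 + 1/Suc n"
  shows "Cauchy s"
proof (rule CauchyI)
  have par: "norm (s m - s n)^2 \<le> 2/Suc m + 2/Suc n" for m n
  proof -
    have "(1/2) *\<^sub>R s m + (1/2) *\<^sub>R s n \<in> S" by (rule convexD[OF \<open>convex S\<close> sS sS]) auto
    then have "d \<le> norm ((1/2) *\<^sub>R s m + (1/2) *\<^sub>R s n)" by (rule d_le)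
    then have "2*d \<le> norm (s m + s n)" by (simp flip: scaleR_add_right)
    then have "(2*d)^2 \<le> norm (s m + s n)^2" using d0 by (intro power_mono) auto
    moreover have "norm (s m + s n)^2 + norm (s m - s n)^2 = 2*norm (s m)^2 + 2*norm (s n)^2"
      by (simp add: power2_norm_eq_inner inner_add inner_diff inner_commute)
    ultimately show ?thesis using sn[of m] sn[of n] by (simp add: power_mult_distrib)
  qed
  fix e :: real assume e: "0 < e"
  obtain N :: nat where "4/e^2 < real N" using reals_Archimedean2 by blast
  then have "4/e^2 < real (Suc N)" by simp
  then have N: "4 / Suc N < e^2" using e by (simp add: divide_less_eq mult.commute)
  show "\<exists>M. \<forall>m\<ge>M. \<forall>n\<ge>M. norm (s m - s n) < e"
  proof (intro exI allI impI)
    fix m n assume "N \<le> m" "N \<le> n"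
    then have "2/Suc m \<le> 2/Suc N" "2/Suc n \<le> 2/Suc N" by (auto intro!: divide_left_mono)
    then have "norm (s m - s n)^2 < e^2" using par[of m n] N by simp
    then show "norm (s m - s n) < e" using e by (simp add: power_less_imp_less_base)
  qed
qed

lemma closed_convex_min_norm_exists:
  fixes S :: "'a::{real_inner,complete_space} set"
  assumes "closed S" and "convex S" and "S \<noteq> {}"
  shows "\<exists>z\<in>S. \<forall>y\<in>S. norm z \<le> norm y"
proof -
  define d where "d = Inf (norm ` S)"
  have bdd: "bdd_below (norm ` S)" by (rule bdd_belowI[of _ 0]) auto
  have d_le: "d \<le> norm y" if "y \<in> S" for y unfolding d_def using bdd that by (simp add: cInf_lower)
  have d0: "0 \<le> d" unfolding d_def using assms(3) by (intro cInf_greatest) auto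
  have "\<exists>y\<in>S. norm y^2 < d^2 + 1/Suc n" for n
  proof -
    have "d < sqrt (d^2 + 1/Suc n)" using d0 by (simp add: real_less_rsqrt)
    then obtain y where "y \<in> S" "norm y < sqrt (d^2 + 1/Suc n)"
      using cInf_lessD[of "norm ` S"] assms(3) unfolding d_def by auto
    then have "norm y^2 < sqrt (d^2 + 1/Suc n)^2" by (intro power_strict_mono) auto
    then show ?thesis using \<open>y \<in> S\<close> by auto
  qed
  then obtain s where sS: "\<And>n. s n \<in> S" and sn: "\<And>n. norm (s n)^2 < d^2 + 1/Suc n" by metis
  have "Cauchy s" using Cauchy_minimizing_sequence[OF assms(2) sS d_le d0 sn] .
  then obtain z where lim: "s \<longlonglongrightarrow> z" using Cauchy_convergent_iff convergent_def by blast
  have "z \<in> S" using closed_sequentially[OF assms(1) sS lim] .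
  have "(\<lambda>n. norm (s n)^2) \<longlonglongrightarrow> norm z^2" by (intro tendsto_intros lim)
  moreover have "(\<lambda>n. d^2 + inverse (real (Suc n))) \<longlonglongrightarrow> d^2 + 0"
    by (intro tendsto_intros LIMSEQ_inverse_real_of_nat)
  moreover have "norm (s n)^2 \<le> d^2 + inverse (real (Suc n))" for n
    using sn[of n] by (simp add: inverse_eq_divide)
  ultimately have "norm z^2 \<le> d^2" using LIMSEQ_le by fastforce
  then have "norm z \<le> d" using d0 by (rule power2_le_imp_le)
  then show ?thesis using \<open>z \<in> S\<close> d_le by (meson order.trans)
qed

lemma inner_eq_zero_if_norm_min_on_line:
  fixes z v :: "'a::real_inner"
  assumes "\<And>t. norm z \<le> norm (z + t *\<^sub>R v)"
  shows "inner z v = 0"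
proof (cases "v = 0")
  case False
  define t where "t = - inner z v / inner v v"
  have "norm z^2 \<le> norm (z + t *\<^sub>R v)^2" using assms[of t] by (simp add: power_mono)
  also have "\<dots> = norm z^2 + 2 * t * inner z v + t^2 * inner v v"
    unfolding power2_norm_eq_inner by (simp add: inner_add inner_commute power2_eq_square algebra_simps)
  also have "\<dots> = norm z^2 + t * inner z v"
    using False by (simp add: t_def power2_eq_square)
  also have "\<dots> = norm z^2 - (inner z v)^2 / inner v v"
    by (simp add: t_def power2_eq_square)
  finally have "(inner z v)^2 / inner v v \<le> 0" by simp
  moreover have "0 < inner v v" using False by simp
  ultimately show ?thesis by (simp add: divide_le_0_iff)
qed simp

lemma riesz_representation:
  fixes f :: "'a::{real_inner,complete_space} \<Rightarrow> real"
  assumes "bounded_linear f"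
  shows "\<exists>z. \<forall>x. f x = inner z x"
proof (cases "\<forall>x. f x = 0")
  case True then show ?thesis by (intro exI[of _ 0]) simp
next
  case False
  interpret f: bounded_linear f by fact
  obtain x1 where "f x1 \<noteq> 0" using False by blast
  define C where "C = {x. f x = 1}"
  have "closed C" unfolding C_def
    by (intro closed_Collect_eq f.continuous_on continuous_on_id continuous_on_const)
  moreover have "convex C" unfolding C_def by (rule convexI) (simp add: f.add f.scaleR)
  moreover have "x1 /\<^sub>R f x1 \<in> C" using \<open>f x1 \<noteq> 0\<close> by (simp add: C_def f.scaleR)
  ultimately obtain z where "z \<in> C" and min: "\<forall>y\<in>C. norm z \<le> norm y"
    using closed_convex_min_norm_exists[of C] by auto
  then have fz: "f z = 1" by (simp add: C_def)
  have orth: "inner z v = 0" if "f v = 0" for v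
    using min fz that by (intro inner_eq_zero_if_norm_min_on_line) (simp add: C_def f.add f.scaleR)
  show ?thesis
  proof (intro exI allI)
    fix x
    have "inner z (x - f x *\<^sub>R z) = 0" by (rule orth) (simp add: f.diff f.scaleR fz)
    then have "inner z x = f x * inner z z" by (simp add: inner_diff_right)
    moreover have "z \<noteq> 0" using fz by auto
    ultimately show "f x = inner ((1 / inner z z) *\<^sub>R z) x" by simp
  qed
qed

section \<open>Adjoints of bounded complex linear operators\<close>

lemma scaleC_zero_right [simp]: "scaleC c 0 = (0::'a::complex_vector)"
  using scaleC_add_right[of c 0 0] by simp

lemma scaleC_eq_Re_Im: "scaleC c v = Re c *\<^sub>R v + Im c *\<^sub>R scaleC \<i> (v::'a::complex_vector)"
proof -
  have "c = complex_of_real (Re c) + complex_of_real (Im c) * \<i>" by (simp add: complex_eq_iff)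
  then have "scaleC c v = scaleC (complex_of_real (Re c)) v + scaleC (complex_of_real (Im c) * \<i>) v"
    by (metis scaleC_add_left)
  then show ?thesis by (simp add: scaleC_of_real flip: scaleC_scaleC)
qed

lemma scaleC_i_scaleC_i [simp]: "scaleC \<i> (scaleC \<i> v) = - (v::'a::complex_vector)"
  by (simp add: scaleC_scaleC scaleC_of_real[of "-1", simplified])

lemma inner_scaleC_i_right: "inner u (scaleC \<i> v) = - inner (scaleC \<i> u) (v::'a::complex_hilbert)"
  using inner_scaleC_i[of u "scaleC \<i> v"] by simp

lemma inner_scaleC_left: "inner (scaleC c u) v = inner u (scaleC (cnj c) (v::'a::complex_hilbert))"
  by (simp add: scaleC_eq_Re_Im[of c] scaleC_eq_Re_Im[of "cnj c"] inner_add_left inner_add_right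
      inner_diff_right inner_scaleC_i_right)

lemma inner_scaleC_right: "inner u (scaleC c v) = inner (scaleC (cnj c) u) (v::'a::complex_hilbert)"
  using inner_scaleC_left[of "cnj c" u v] by simp

lemma bounded_linear_scaleC: "bounded_linear (scaleC c :: 'a::complex_hilbert \<Rightarrow> 'a)"
proof (rule bounded_linear_intro[where K = "cmod c"])
  fix x y :: 'a and r :: real
  show "scaleC c (x + y) = scaleC c x + scaleC c y" by (rule scaleC_add_right)
  show "scaleC c (r *\<^sub>R x) = r *\<^sub>R scaleC c x"
    by (simp add: scaleC_of_real[symmetric] scaleC_scaleC mult.commute)
  have "cnj c * c = complex_of_real ((cmod c)^2)"
    using cmod_power2[of c] by (simp add: complex_eq_iff power2_eq_square)
  then have "norm (scaleC c x)^2 = inner x ((cmod c)^2 *\<^sub>R x)"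
    by (simp add: power2_norm_eq_inner inner_scaleC_left scaleC_scaleC scaleC_of_real)
  then have "norm (scaleC c x)^2 = (cmod c * norm x)^2"
    by (simp add: power_mult_distrib power2_norm_eq_inner)
  then show "norm (scaleC c x) \<le> norm x * cmod c" by (simp add: power2_eq_iff_nonneg mult.commute)
qed

lemma cblinD:
  assumes "cblin T"
  shows "T (x + y) = T x + T y" "T (scaleC c x) = scaleC c (T x)" "bounded_linear T"
  using assms unfolding cblin_def by (auto simp: linear_simps)

lemma cblin_zero: "cblin (\<lambda>x. 0)"
  unfolding cblin_def by simp

lemma cblin_comp:
  assumes "cblin T" and "cblin U"
  shows "cblin (\<lambda>x. T (U x))"
  using assms unfolding cblin_def by (auto intro: bounded_linear_compose)

lemma cblin_add:
  assumes "cblin T" and "cblin U"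
  shows "cblin (\<lambda>x. T x + U x)"
  using assms unfolding cblin_def by (auto intro: bounded_linear_add simp: scaleC_add_right)

lemma cblin_scaleC:
  assumes "cblin T"
  shows "cblin (\<lambda>x. scaleC c (T x))"
proof -
  have "bounded_linear (\<lambda>x. scaleC c (T x))"
    using bounded_linear_compose[OF bounded_linear_scaleC cblinD(3)[OF assms]] by (simp add: o_def)
  then show ?thesis using assms unfolding cblin_def by (auto simp: scaleC_scaleC mult.commute)
qed

lemma real_adjoint_exists:
  fixes T :: "'h::complex_hilbert \<Rightarrow> 'k::complex_hilbert"
  assumes "cblin T"
  shows "\<exists>S. \<forall>x y. inner (T x) y = inner x (S y)"
proof -
  have "\<exists>z. \<forall>x. inner (T x) y = inner z x" for y
    by (rule riesz_representation)
      (rule bounded_linear_compose[OF bounded_linear_inner_left cblinD(3)[OF assms]])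
  then obtain S where "\<forall>y x. inner (T x) y = inner (S y) x" by metis
  then show ?thesis by (metis inner_commute)
qed

text \<open>cinner is built from the real inner product alone, so for complex linear T a real adjoint
  already satisfies the defining property of adj T.\<close>
lemma inner_adj:
  fixes T :: "'h::complex_hilbert \<Rightarrow> 'k::complex_hilbert"
  assumes "cblin T"
  shows "inner (T x) y = inner x (adj T y)"
proof -
  obtain S where S: "\<forall>x y. inner (T x) y = inner x (S y)" using real_adjoint_exists[OF assms] ..
  then have "\<forall>x y. cinner (T x) y = cinner x (S y)"
    by (simp add: cinner_def flip: cblinD(2)[OF assms])
  then have "\<forall>x y. cinner (T x) y = cinner x (adj T y)"
    unfolding adj_def by (rule someI[where P = "\<lambda>S. \<forall>x y. cinner (T x) y = cinner x (S y)"])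
  then have "Re (cinner (T x) y) = Re (cinner x (adj T y))" by simp
  then show ?thesis by (simp add: cinner_def)
qed

lemma adj_eqI:
  fixes T :: "'h::complex_hilbert \<Rightarrow> 'k::complex_hilbert"
  assumes "cblin T" and "\<And>x y. inner (T x) y = inner x (S y)"
  shows "adj T = S"
proof
  fix y show "adj T y = S y"
    by (rule vector_eq_ldot[THEN iffD1]) (simp add: assms inner_adj[OF assms(1), symmetric])
qed

lemma cblin_adj:
  fixes T :: "'h::complex_hilbert \<Rightarrow> 'k::complex_hilbert"
  assumes T: "cblin T"
  shows "cblin (adj T)"
proof -
  obtain K where "K > 0" and K: "\<And>x. norm (T x) \<le> norm x * K"
    using bounded_linear.pos_bounded[OF cblinD(3)[OF T]] by blast
  have bound: "norm (adj T y) \<le> norm y * K" for y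
  proof (cases "adj T y = 0")
    case False
    have "norm (adj T y) * norm (adj T y) = inner (adj T y) (adj T y)"
      by (simp add: power2_norm_eq_inner[symmetric] power2_eq_square)
    also have "\<dots> = inner (T (adj T y)) y" by (simp add: inner_adj[OF T])
    also have "\<dots> \<le> norm (T (adj T y)) * norm y" by (rule norm_cauchy_schwarz)
    also have "\<dots> \<le> norm (adj T y) * K * norm y" using K[of "adj T y"] by (rule mult_right_mono) simp
    also have "\<dots> = norm (adj T y) * (norm y * K)" by (simp only: ac_simps)
    finally show ?thesis using False by simp
  qed (use \<open>K > 0\<close> in simp)
  have add: "adj T (x + y) = adj T x + adj T y" for x y
    by (rule vector_eq_ldot[THEN iffD1], intro allI) (simp add: inner_adj[OF T, symmetric] inner_add_right)
  have scaleR: "adj T (r *\<^sub>R x) = r *\<^sub>R adj T x" for r x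
    by (rule vector_eq_ldot[THEN iffD1], intro allI) (simp add: inner_adj[OF T, symmetric])
  have "adj T (scaleC c x) = scaleC c (adj T x)" for c x
    by (rule vector_eq_ldot[THEN iffD1], intro allI)
      (simp add: inner_adj[OF T, symmetric] inner_scaleC_right cblinD(2)[OF T])
  then show ?thesis unfolding cblin_def using bounded_linear_intro[OF add scaleR bound] by blast
qed

lemma adj_adj:
  fixes T :: "'h::complex_hilbert \<Rightarrow> 'k::complex_hilbert"
  assumes "cblin T"
  shows "adj (adj T) = T"
  by (rule adj_eqI[OF cblin_adj[OF assms]]) (use inner_adj[OF assms] in \<open>simp add: inner_commute\<close>)

lemma adj_zero: "adj (\<lambda>x::'h::complex_hilbert. 0::'k::complex_hilbert) = (\<lambda>y. 0)"
  by (rule adj_eqI[OF cblin_zero]) simp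

lemma adj_comp:
  fixes T :: "'k::complex_hilbert \<Rightarrow> 'l::complex_hilbert" and U :: "'h::complex_hilbert \<Rightarrow> 'k"
  assumes "cblin T" and "cblin U"
  shows "adj (\<lambda>x. T (U x)) = (\<lambda>y. adj U (adj T y))"
  by (rule adj_eqI[OF cblin_comp[OF assms]]) (simp add: inner_adj[OF assms(1)] inner_adj[OF assms(2)])

lemma adj_add:
  fixes T U :: "'h::complex_hilbert \<Rightarrow> 'k::complex_hilbert"
  assumes "cblin T" and "cblin U"
  shows "adj (\<lambda>x. T x + U x) = (\<lambda>y. adj T y + adj U y)"
  by (rule adj_eqI[OF cblin_add[OF assms]]) (simp add: inner_adj[OF assms(1)] inner_adj[OF assms(2)] inner_add)

lemma adj_scaleC:
  fixes T :: "'h::complex_hilbert \<Rightarrow> 'k::complex_hilbert"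
  assumes "cblin T"
  shows "adj (\<lambda>x. scaleC c (T x)) = (\<lambda>y. scaleC (cnj c) (adj T y))"
  by (rule adj_eqI[OF cblin_scaleC[OF assms]])
    (simp only: inner_scaleC_right complex_cnj_cnj inner_adj[OF assms, symmetric] cblinD(2)[OF assms])

lemma cblin_eqI_adj_comp:
  fixes S T :: "'h::complex_hilbert \<Rightarrow> 'k::complex_hilbert"
  assumes S: "cblin S" and T: "cblin T"
    and "\<And>k. adj S (S k) = R k" "\<And>k. adj S (T k) = R k"
    and "\<And>k. adj T (S k) = R k" "\<And>k. adj T (T k) = R k"
  shows "S = T"
proof
  fix k
  have "inner (S k - T k) (S k - T k)
      = inner k (adj S (S k) - adj S (T k) - (adj T (S k) - adj T (T k)))"
    by (simp add: inner_diff inner_adj[OF S] inner_adj[OF T])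
  also have "\<dots> = 0" using assms(3-6) by simp
  finally show "S k = T k" by simp
qed

lemma cblin_eqI_comp_adj:
  fixes S T :: "'h::complex_hilbert \<Rightarrow> 'k::complex_hilbert"
  assumes S: "cblin S" and T: "cblin T"
    and "\<And>h. S (adj S h) = R h" "\<And>h. S (adj T h) = R h"
    and "\<And>h. T (adj S h) = R h" "\<And>h. T (adj T h) = R h"
  shows "S = T"
proof -
  have "adj S = adj T"
    by (rule cblin_eqI_adj_comp[OF cblin_adj[OF S] cblin_adj[OF T]]) (simp_all add: adj_adj S T assms)
  then have "adj (adj S) = adj (adj T)" by simp
  then show ?thesis by (simp only: adj_adj S T)
qed

section \<open>Operator matrices on direct sums\<close>

definition block_operator ::
  "('h \<Rightarrow> 'hp::plus) \<Rightarrow> ('k \<Rightarrow> 'hp) \<Rightarrow> ('h \<Rightarrow> 'kp::plus) \<Rightarrow> ('k \<Rightarrow> 'kp)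
    \<Rightarrow> 'h \<times> 'k \<Rightarrow> 'hp \<times> 'kp" where
  "block_operator A B C D = (\<lambda>p. (A (fst p) + B (snd p), C (fst p) + D (snd p)))"

lemma cblin_block_operator:
  fixes A :: "'h::complex_hilbert \<Rightarrow> 'hp::complex_hilbert" and B :: "'k::complex_hilbert \<Rightarrow> 'hp"
    and C :: "'h \<Rightarrow> 'kp::complex_hilbert" and D :: "'k \<Rightarrow> 'kp"
  assumes A: "cblin A" and B: "cblin B" and C: "cblin C" and D: "cblin D"
  shows "cblin (block_operator A B C D)"
proof -
  have "bounded_linear (block_operator A B C D)" unfolding block_operator_def
    by (intro bounded_linear_Pair bounded_linear_add
        bounded_linear_compose[OF cblinD(3)[OF A] bounded_linear_fst]
        bounded_linear_compose[OF cblinD(3)[OF B] bounded_linear_snd]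
        bounded_linear_compose[OF cblinD(3)[OF C] bounded_linear_fst]
        bounded_linear_compose[OF cblinD(3)[OF D] bounded_linear_snd])
  then show ?thesis unfolding cblin_def
    by (simp add: block_operator_def scaleC_prod_def cblinD(2)[OF A] cblinD(2)[OF B]
        cblinD(2)[OF C] cblinD(2)[OF D] scaleC_add_right)
qed

lemma adj_block_operator:
  fixes A :: "'h::complex_hilbert \<Rightarrow> 'hp::complex_hilbert" and B :: "'k::complex_hilbert \<Rightarrow> 'hp"
    and C :: "'h \<Rightarrow> 'kp::complex_hilbert" and D :: "'k \<Rightarrow> 'kp"
  assumes A: "cblin A" and B: "cblin B" and C: "cblin C" and D: "cblin D"
  shows "adj (block_operator A B C D) = block_operator (adj A) (adj C) (adj B) (adj D)"
  by (rule adj_eqI[OF cblin_block_operator[OF A B C D]])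
    (simp add: block_operator_def inner_prod_def inner_add inner_adj[OF A] inner_adj[OF B]
      inner_adj[OF C] inner_adj[OF D])

lemma cspan_image_subset:
  assumes "linear f" and "\<And>c x. f (scaleC c x) = scaleC c (f x)" and "f ` X \<subseteq> Y"
  shows "f ` cspan X \<subseteq> cspan Y"
  unfolding cspan_def span_linear_image[OF assms(1), symmetric]
  by (rule span_mono) (use assms(2,3) in force)

lemma closure_cspan_prod_eq_UNIV:
  fixes S :: "('a::complex_hilbert \<times> 'b::complex_hilbert) set"
  assumes "(\<lambda>p. (p, 0)) ` S1 \<subseteq> S" and "(\<lambda>q. (0, q)) ` S2 \<subseteq> S"
    and "closure (cspan S1) = UNIV" and "closure (cspan S2) = UNIV"
  shows "closure (cspan S) = UNIV"
proof -
  have "(\<lambda>p. (p, 0)) ` cspan S1 \<subseteq> cspan S"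
    by (rule cspan_image_subset[OF _ _ assms(1)]) (auto intro: linearI simp: scaleC_prod_def)
  moreover have "(\<lambda>q. (0, q)) ` cspan S2 \<subseteq> cspan S"
    by (rule cspan_image_subset[OF _ _ assms(2)]) (auto intro: linearI simp: scaleC_prod_def)
  ultimately have "(p, 0) + (0, q) \<in> cspan S" if "p \<in> cspan S1" "q \<in> cspan S2" for p q
    using that unfolding cspan_def by (blast intro: span_add)
  then have "cspan S1 \<times> cspan S2 \<subseteq> cspan S" by force
  then have "closure (cspan S1) \<times> closure (cspan S2) \<subseteq> closure (cspan S)"
    by (metis closure_Times closure_mono)
  then show ?thesis using assms(3,4) by auto
qed

section \<open>Representations of the linking algebra\<close>

lemma srepD:
  assumes "srep add scal mul st \<pi>"
  shows "cblin (\<pi> l)" "\<pi> (add l m) h = \<pi> l h + \<pi> m h" "\<pi> (scal c l) h = scaleC c (\<pi> l h)"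
    "\<pi> (mul l m) h = \<pi> l (\<pi> m h)" "adj (\<pi> l) = \<pi> (st l)"
  using assms unfolding srep_def by auto

lemmas is_repD = srepD[of "(+)" scaleC "(*)" sstar, folded is_rep_def]

lemma bimodule_repD:
  assumes "bimodule_rep lact ract lip rip \<pi>A \<pi>X \<pi>B"
  shows "is_rep \<pi>A" "is_rep \<pi>B" "cblin (\<pi>X x)"
    "\<pi>X (x + y) k = \<pi>X x k + \<pi>X y k" "\<pi>X (scaleC c x) k = scaleC c (\<pi>X x k)"
    "\<pi>X x (adj (\<pi>X y) h) = \<pi>A (lip x y) h" "adj (\<pi>X x) (\<pi>X y k) = \<pi>B (rip x y) k"
  using assms unfolding bimodule_rep_def by (auto simp: fun_eq_iff)

lemma fun_additive_zero:
  fixes F :: "'a::monoid_add \<Rightarrow> 'k \<Rightarrow> 'v::ab_group_add"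
  assumes "\<And>x y k. F (x + y) k = F x k + F y k"
  shows "F 0 = (\<lambda>k. 0)"
proof
  fix k show "F 0 k = 0" using assms[of 0 0 k] by simp
qed

lemma equivalence_bimoduleD:
  assumes "equivalence_bimodule lact ract lip rip"
  shows "lip (lact a x) y = a * lip x y" "lip y x = sstar (lip x y)"
    "rip x (ract y b) = rip x y * b" "rip y x = sstar (rip x y)"
proof -
  from assms have "(\<forall>a x y. lip (lact a x) y = a * lip x y) \<and> (\<forall>x y. lip y x = sstar (lip x y))
    \<and> (\<forall>x y b. rip x (ract y b) = rip x y * b) \<and> (\<forall>x y. rip y x = sstar (rip x y))"
    unfolding equivalence_bimodule_def by (elim conjE) (intro conjI; assumption)
  then show "lip (lact a x) y = a * lip x y" "lip y x = sstar (lip x y)"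
    "rip x (ract y b) = rip x y * b" "rip y x = sstar (rip x y)" by blast+
qed

lemma lip_lact_right:
  assumes "equivalence_bimodule lact ract lip rip"
  shows "lip x (lact a y) = lip x y * sstar a"
proof -
  note D = equivalence_bimoduleD[OF assms]
  have "sstar (lip y x) = lip x y" by (subst D(2)) (rule sstar_sstar)
  have "lip x (lact a y) = sstar (lip (lact a y) x)" by (rule D(2))
  also have "\<dots> = sstar (lip y x) * sstar a" by (simp only: D(1) sstar_mult)
  also have "\<dots> = lip x y * sstar a" by (simp only: \<open>sstar (lip y x) = lip x y\<close>)
  finally show ?thesis .
qed

lemma rip_ract_left:
  assumes "equivalence_bimodule lact ract lip rip"
  shows "rip (ract x b) y = sstar b * rip x y"
proof -
  note D = equivalence_bimoduleD[OF assms]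
  have "sstar (rip y x) = rip x y" by (subst D(4)) (rule sstar_sstar)
  have "rip (ract x b) y = sstar (rip y (ract x b))" by (rule D(4))
  also have "\<dots> = sstar b * sstar (rip y x)" by (simp only: D(3) sstar_mult)
  also have "\<dots> = sstar b * rip x y" by (simp only: \<open>sstar (rip y x) = rip x y\<close>)
  finally show ?thesis .
qed

text \<open>B need not be unital, so the axiom for a x b does not give this directly.\<close>
lemma bimodule_rep_lact:
  assumes E: "equivalence_bimodule lact ract lip rip"
    and R: "bimodule_rep lact ract lip rip \<pi>A \<pi>X \<pi>B"
  shows "\<pi>X (lact a x) = (\<lambda>k. \<pi>A a (\<pi>X x k))"
proof -
  note A = is_repD[OF bimodule_repD(1)[OF R]] and X = bimodule_repD[OF R]
  have adj_T: "adj (\<lambda>k. \<pi>A a (\<pi>X x k)) = (\<lambda>h. adj (\<pi>X x) (\<pi>A (sstar a) h))"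
    by (simp add: adj_comp[OF A(1) X(3)] A(5))
  show ?thesis
    by (rule cblin_eqI_comp_adj[OF X(3) cblin_comp[OF A(1) X(3)],
          where R = "\<lambda>h. \<pi>A a (\<pi>A (lip x x) (\<pi>A (sstar a) h))"])
      (simp_all add: adj_T X(6) A(4) equivalence_bimoduleD(1)[OF E] lip_lact_right[OF E])
qed

lemma bimodule_rep_ract:
  assumes E: "equivalence_bimodule lact ract lip rip"
    and R: "bimodule_rep lact ract lip rip \<pi>A \<pi>X \<pi>B"
  shows "\<pi>X (ract x b) = (\<lambda>k. \<pi>X x (\<pi>B b k))"
proof -
  note B = is_repD[OF bimodule_repD(2)[OF R]] and X = bimodule_repD[OF R]
  have adj_T: "adj (\<lambda>k. \<pi>X x (\<pi>B b k)) = (\<lambda>h. \<pi>B (sstar b) (adj (\<pi>X x) h))"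
    by (simp add: adj_comp[OF X(3) B(1)] B(5))
  show ?thesis
    by (rule cblin_eqI_adj_comp[OF X(3) cblin_comp[OF X(3) B(1)],
          where R = "\<lambda>k. \<pi>B (sstar b) (\<pi>B (rip x x) (\<pi>B b k))"])
      (simp_all add: adj_T X(7) B(4) equivalence_bimoduleD(3)[OF E] rip_ract_left[OF E])
qed

lemma adj_bimodule_rep_add:
  assumes "bimodule_rep lact ract lip rip \<pi>A \<pi>X \<pi>B"
  shows "adj (\<pi>X (x + y)) h = adj (\<pi>X x) h + adj (\<pi>X y) h"
proof -
  note X = bimodule_repD[OF assms]
  have "\<pi>X (x + y) = (\<lambda>k. \<pi>X x k + \<pi>X y k)" by (rule ext, rule X(4))
  then show ?thesis by (simp add: adj_add[OF X(3) X(3)])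
qed

lemma adj_bimodule_rep_scaleC:
  assumes "bimodule_rep lact ract lip rip \<pi>A \<pi>X \<pi>B"
  shows "adj (\<pi>X (scaleC c x)) h = scaleC (cnj c) (adj (\<pi>X x) h)"
proof -
  note X = bimodule_repD[OF assms]
  have "\<pi>X (scaleC c x) = (\<lambda>k. scaleC c (\<pi>X x k))" by (rule ext, rule X(5))
  then show ?thesis by (simp add: adj_scaleC[OF X(3)])
qed

lemma adj_bimodule_rep_lact:
  assumes E: "equivalence_bimodule lact ract lip rip"
    and R: "bimodule_rep lact ract lip rip \<pi>A \<pi>X \<pi>B"
  shows "adj (\<pi>X (lact a x)) h = adj (\<pi>X x) (\<pi>A (sstar a) h)"
  using adj_comp[OF is_repD(1)[OF bimodule_repD(1)[OF R]] bimodule_repD(3)[OF R]]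
  by (simp add: bimodule_rep_lact[OF E R] is_repD(5)[OF bimodule_repD(1)[OF R]])

lemma adj_bimodule_rep_ract:
  assumes E: "equivalence_bimodule lact ract lip rip"
    and R: "bimodule_rep lact ract lip rip \<pi>A \<pi>X \<pi>B"
  shows "adj (\<pi>X (ract x b)) h = \<pi>B (sstar b) (adj (\<pi>X x) h)"
  using adj_comp[OF bimodule_repD(3)[OF R] is_repD(1)[OF bimodule_repD(2)[OF R]]]
  by (simp add: bimodule_rep_ract[OF E R] is_repD(5)[OF bimodule_repD(2)[OF R]])

definition linking_rep ::
  "('a \<Rightarrow> 'h::complex_hilbert \<Rightarrow> 'h) \<Rightarrow> ('x \<Rightarrow> 'k::complex_hilbert \<Rightarrow> 'h) \<Rightarrow> ('b \<Rightarrow> 'k \<Rightarrow> 'k)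
    \<Rightarrow> ('a, 'x, 'b) linking \<Rightarrow> 'h \<times> 'k \<Rightarrow> 'h \<times> 'k" where
  "linking_rep \<pi>A \<pi>X \<pi>B l =
     (case l of (a, x, y, b) \<Rightarrow> block_operator (\<pi>A a) (\<pi>X x) (adj (\<pi>X y)) (\<pi>B b))"

lemma linking_rep_apply [simp]:
  "linking_rep \<pi>A \<pi>X \<pi>B (a, x, y, b) = block_operator (\<pi>A a) (\<pi>X x) (adj (\<pi>X y)) (\<pi>B b)"
  by (simp add: linking_rep_def)

lemma srep_linking_rep:
  fixes \<pi>A :: "'a::cstar \<Rightarrow> 'h::complex_hilbert \<Rightarrow> 'h"
    and \<pi>X :: "'x::complex_vector \<Rightarrow> 'k::complex_hilbert \<Rightarrow> 'h"
    and \<pi>B :: "'b::cstar \<Rightarrow> 'k \<Rightarrow> 'k"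
  assumes E: "equivalence_bimodule lact ract lip rip"
    and R: "bimodule_rep lact ract lip rip \<pi>A \<pi>X \<pi>B"
  shows "srep link_add link_scal (link_mult lact ract lip rip) link_star (linking_rep \<pi>A \<pi>X \<pi>B)"
proof -
  note A = is_repD[OF bimodule_repD(1)[OF R]] and B = is_repD[OF bimodule_repD(2)[OF R]]
    and X = bimodule_repD[OF R]
  note X_lact = bimodule_rep_lact[OF E R, THEN fun_cong]
    and X_ract = bimodule_rep_ract[OF E R, THEN fun_cong]
    and adj_X = adj_bimodule_rep_add[OF R] adj_bimodule_rep_scaleC[OF R]
      adj_bimodule_rep_lact[OF E R] adj_bimodule_rep_ract[OF E R]
  note lin = cblinD(1)[OF A(1)] cblinD(1)[OF B(1)] cblinD(1)[OF X(3)]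
    cblinD(1)[OF cblin_adj[OF X(3)]]
  show ?thesis
    unfolding srep_def
  proof (intro conjI allI)
    fix l :: "('a, 'x, 'b) linking"
    obtain a x y b where l: "l = (a, x, y, b)" by (cases l)
    show "cblin (linking_rep \<pi>A \<pi>X \<pi>B l)"
      unfolding l by (simp add: cblin_block_operator A(1) X(3) cblin_adj B(1))
    show "linking_rep \<pi>A \<pi>X \<pi>B (link_star l) = adj (linking_rep \<pi>A \<pi>X \<pi>B l)"
      unfolding l
      by (simp add: link_star_def adj_block_operator[OF A(1) X(3) cblin_adj[OF X(3)] B(1)]
          adj_adj[OF X(3)] A(5) B(5))
    fix c :: complex
    show "linking_rep \<pi>A \<pi>X \<pi>B (link_scal c l) = (\<lambda>h. scaleC c (linking_rep \<pi>A \<pi>X \<pi>B l h))"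
      unfolding l
      by (simp add: link_scal_def block_operator_def fun_eq_iff A(3) B(3) X(5) adj_X
          scaleC_prod_def scaleC_add_right)
  next
    fix l m :: "('a, 'x, 'b) linking"
    obtain a1 x1 y1 b1 where l: "l = (a1, x1, y1, b1)" by (cases l)
    obtain a2 x2 y2 b2 where m: "m = (a2, x2, y2, b2)" by (cases m)
    show "linking_rep \<pi>A \<pi>X \<pi>B (link_add l m)
        = (\<lambda>h. linking_rep \<pi>A \<pi>X \<pi>B l h + linking_rep \<pi>A \<pi>X \<pi>B m h)"
      unfolding l m by (simp add: link_add_def block_operator_def fun_eq_iff A(2) B(2) X(4) adj_X)
    show "linking_rep \<pi>A \<pi>X \<pi>B (link_mult lact ract lip rip l m)
        = linking_rep \<pi>A \<pi>X \<pi>B l \<circ> linking_rep \<pi>A \<pi>X \<pi>B m"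
      unfolding l m
      by (simp add: link_mult_def block_operator_def fun_eq_iff A(2,4) B(2,4) X(4,6,7) lin
          X_lact X_ract adj_X sstar_sstar)
  qed
qed

lemma closure_cspan_linking_rep_eq_UNIV:
  fixes VA :: "'h::complex_hilbert \<Rightarrow> 'hp::complex_hilbert"
    and VB :: "'k::complex_hilbert \<Rightarrow> 'kp::complex_hilbert"
  assumes R: "bimodule_rep lact ract lip rip \<pi>A \<pi>X \<pi>B"
    and "closure (cspan {\<pi>A a (VA h) | a h. True}) = UNIV"
    and "closure (cspan {\<pi>B b (VB k) | b k. True}) = UNIV"
  shows "closure (cspan {linking_rep \<pi>A \<pi>X \<pi>B l (block_operator VA (\<lambda>k. 0) (\<lambda>h. 0) VB hk)
    | l hk. True}) = UNIV"
proof (rule closure_cspan_prod_eq_UNIV[OF _ _ assms(2,3)])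
  note X = bimodule_repD[OF R]
  have zeros: "\<pi>A 0 = (\<lambda>h. 0)" "\<pi>B 0 = (\<lambda>k. 0)" "\<pi>X 0 = (\<lambda>k. 0)"
    by (intro fun_additive_zero is_repD(2) X(1,2,4))+
  have "(\<pi>A a (VA h), 0)
      = linking_rep \<pi>A \<pi>X \<pi>B (a, 0, 0, 0) (block_operator VA (\<lambda>k. 0) (\<lambda>h. 0) VB (h, 0))" for a h
    by (simp add: block_operator_def zeros adj_zero)
  then show "(\<lambda>p. (p, 0)) ` {\<pi>A a (VA h) | a h. True}
      \<subseteq> {linking_rep \<pi>A \<pi>X \<pi>B l (block_operator VA (\<lambda>k. 0) (\<lambda>h. 0) VB hk) | l hk. True}"
    by blast
  have "(0, \<pi>B b (VB k))
      = linking_rep \<pi>A \<pi>X \<pi>B (0, 0, 0, b) (block_operator VA (\<lambda>k. 0) (\<lambda>h. 0) VB (0, k))" for b k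
    by (simp add: block_operator_def zeros adj_zero)
  then show "(\<lambda>q. (0, q)) ` {\<pi>B b (VB k) | b k. True}
      \<subseteq> {linking_rep \<pi>A \<pi>X \<pi>B l (block_operator VA (\<lambda>k. 0) (\<lambda>h. 0) VB hk) | l hk. True}"
    by blast
qed

theorem lemma4p5:
  fixes \<phi> :: "'a::cstar \<Rightarrow> 'h::complex_hilbert \<Rightarrow> 'h"
    and \<psi> :: "'b::cstar \<Rightarrow> 'k::complex_hilbert \<Rightarrow> 'k"
    and \<pi>\<phi> :: "'a \<Rightarrow> 'hp::complex_hilbert \<Rightarrow> 'hp" and V\<phi> :: "'h \<Rightarrow> 'hp"
    and \<pi>\<psi> :: "'b \<Rightarrow> 'kp::complex_hilbert \<Rightarrow> 'kp" and V\<psi> :: "'k \<Rightarrow> 'kp"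
    and lact :: "'a \<Rightarrow> 'x::complex_vector \<Rightarrow> 'x" and ract :: "'x \<Rightarrow> 'b \<Rightarrow> 'x"
    and lip :: "'x \<Rightarrow> 'x \<Rightarrow> 'a" and rip :: "'x \<Rightarrow> 'x \<Rightarrow> 'b"
    and \<pi>X :: "'x \<Rightarrow> 'kp \<Rightarrow> 'hp"
    and \<rho> :: "('a, 'x, 'b) linking \<Rightarrow> 'hp \<times> 'kp \<Rightarrow> 'hp \<times> 'kp"
    and W :: "'h \<times> 'k \<Rightarrow> 'hp \<times> 'kp"
    and \<tau> :: "('a, 'x, 'b) linking \<Rightarrow> 'h \<times> 'k \<Rightarrow> 'h \<times> 'k"
  assumes "completely_positive \<phi>" and "completely_positive \<psi>"
    and "min_stinespring \<phi> \<pi>\<phi> V\<phi>" and "min_stinespring \<psi> \<pi>\<psi> V\<psi>"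
    and "equivalence_bimodule lact ract lip rip"
    and "bimodule_rep lact ract lip rip \<pi>\<phi> \<pi>X \<pi>\<psi>"
    and "\<And>a x y b hk. \<rho> (a, x, y, b) hk =
           (\<pi>\<phi> a (fst hk) + \<pi>X x (snd hk), adj (\<pi>X y) (fst hk) + \<pi>\<psi> b (snd hk))"
    and "\<And>hk. W hk = (V\<phi> (fst hk), V\<psi> (snd hk))"
    and "\<And>l. \<tau> l = adj W \<circ> \<rho> l \<circ> W"
  shows "min_stinespring_ops link_add link_scal (link_mult lact ract lip rip) link_star \<tau> \<rho> W"
proof -
  have \<rho>: "\<rho> = linking_rep \<pi>\<phi> \<pi>X \<pi>\<psi>"
    by (auto simp: fun_eq_iff linking_rep_def block_operator_def assms(7))
  have W: "W = block_operator V\<phi> (\<lambda>k. 0) (\<lambda>h. 0) V\<psi>"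
    by (simp add: fun_eq_iff block_operator_def assms(8))
  from assms(3,4) have "cblin V\<phi>" "cblin V\<psi>"
    and "closure (cspan {\<pi>\<phi> a (V\<phi> h) | a h. True}) = UNIV"
    and "closure (cspan {\<pi>\<psi> b (V\<psi> k) | b k. True}) = UNIV"
    unfolding min_stinespring_def min_stinespring_ops_def by blast+
  then show ?thesis
    unfolding min_stinespring_ops_def \<rho> W
    using srep_linking_rep[OF assms(5,6)] closure_cspan_linking_rep_eq_UNIV[OF assms(6)]
      cblin_block_operator[OF _ cblin_zero cblin_zero] assms(9)[unfolded \<rho> W] by blast
qed

end
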